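(* For an integer $d\geqslant 0$ and a real $x>0$, let $K_d(x)$ be the largest integer $k$ such that $(k-d)k\leqslant dx$; equivalently $K_d(x)=\lfloor (d+\sqrt{d^2+4dx})/2\rfloor$ (so $K_0(x)=0$). Then for integers $d$ and reals $x$ with $0\leqslant d\leqslant x$ and $x\geqslant 1$, $$K_{d+1}(x)-K_d(x)=\bigl(\sqrt{d+1}-\sqrt{d}\,\bigr)\sqrt{x}+O(1),$$ with an absolute implied constant.
   Context: $\lfloor t\rfloor$ denotes the integer part of the real number $t$. *)

theory Defs
  imports Complex_Main
begin

definition K :: "nat \<Rightarrow> real \<Rightarrow> int" where
  "K d x = (GREATEST k::int. real_of_int ((k - int d) * k) \<le> real d * x)"

end

theory Submission
  imports Defs
begin

text \<open>
  The largest root of \<open>k\<^sup>2 - d k - d x\<close> is \<open>r\<^sub>d = (d + \<surd>(d\<^sup>2 + 4dx))/2\<close>, so \<open>K d x = \<lfloor>r\<^sub>d\<rfloor>\<close>.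
  Writing \<open>2 r\<^sub>d = d + 2\<surd>(dx) + gap d\<close>, one gets
  \<open>2 (r\<^sub>d\<^sub>+\<^sub>1 - r\<^sub>d - (\<surd>(d+1) - \<surd>d) \<surd>x) = 1 + gap (d+1) - gap d\<close>, and the gap is
  increasing (it equals \<open>\<surd>t (\<surd>(t+4x) - \<surd>(4x))\<close>) but grows by at most 2 per unit step
  (it equals \<open>t\<^sup>2 / (\<surd>(t\<^sup>2+4tx) + \<surd>(4tx))\<close>, whose denominator is at least \<open>t\<close>). Hence
  the difference of the roots is within \<open>3/2\<close> of \<open>(\<surd>(d+1) - \<surd>d) \<surd>x\<close>; taking floors
  costs at most 1 more.
\<close>

lemma greatest_int_between_roots:
  fixes r r' :: real
  assumes "r' \<le> 0" "0 \<le> r"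
  shows "(GREATEST k::int. (of_int k - r) * (of_int k - r') \<le> 0) = \<lfloor>r\<rfloor>"
proof (rule Greatest_equality)
  have "0 \<le> \<lfloor>r\<rfloor>"
    using assms by simp
  then have "of_int \<lfloor>r\<rfloor> - r \<le> 0" "0 \<le> of_int \<lfloor>r\<rfloor> - r'"
    using assms by linarith+
  then show "(of_int \<lfloor>r\<rfloor> - r) * (of_int \<lfloor>r\<rfloor> - r') \<le> 0"
    by (rule mult_nonpos_nonneg)
next
  fix k :: int
  assume k: "(of_int k - r) * (of_int k - r') \<le> 0"
  show "k \<le> \<lfloor>r\<rfloor>"
  proof (rule ccontr)
    assume "\<not> k \<le> \<lfloor>r\<rfloor>"
    then have "0 < of_int k - r" "0 < of_int k - r'"
      using assms by linarith+
    with k show False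
      by (simp add: mult_le_0_iff)
  qed
qed

lemma K_eq_floor:
  assumes "0 \<le> x"
  shows "K d x = \<lfloor>(real d + sqrt ((real d)\<^sup>2 + 4 * real d * x)) / 2\<rfloor>"
proof -
  define S where "S = sqrt ((real d)\<^sup>2 + 4 * real d * x)"
  have S2: "S\<^sup>2 = (real d)\<^sup>2 + 4 * real d * x"
    unfolding S_def using assms by simp
  have "real d \<le> S"
    unfolding S_def using assms by (intro real_le_rsqrt) simp
  then have roots: "(real d - S) / 2 \<le> 0" "0 \<le> (real d + S) / 2"
    by simp_all
  have "real_of_int ((k - int d) * k) \<le> real d * x \<longleftrightarrow>
        (of_int k - (real d + S) / 2) * (of_int k - (real d - S) / 2) \<le> 0" for k
  proof -
    have "(of_int k - (real d + S) / 2) * (of_int k - (real d - S) / 2)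
          = real_of_int ((k - int d) * k) - real d * x"
      using S2 by (simp add: field_simps power2_eq_square)
    then show ?thesis by linarith
  qed
  then have "K d x = (GREATEST k::int.
               (of_int k - (real d + S) / 2) * (of_int k - (real d - S) / 2) \<le> 0)"
    unfolding K_def by simp
  also have "\<dots> = \<lfloor>(real d + S) / 2\<rfloor>"
    using roots by (rule greatest_int_between_roots)
  finally show ?thesis
    unfolding S_def .
qed

definition gap :: "real \<Rightarrow> real \<Rightarrow> real" where
  "gap x t = sqrt (t\<^sup>2 + 4 * t * x) - sqrt (4 * t * x)"

lemma gap_eq_product:
  assumes "0 \<le> t" "0 \<le> x"
  shows "gap x t = sqrt t * (sqrt (t + 4 * x) - sqrt (4 * x))"
proof -
  have "t\<^sup>2 + 4 * t * x = t * (t + 4 * x)" "4 * t * x = t * (4 * x)"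
    by (simp_all add: power2_eq_square algebra_simps)
  then show ?thesis
    unfolding gap_def by (metis real_sqrt_mult right_diff_distrib)
qed

lemma gap_mono:
  assumes "0 \<le> t" "t \<le> s" "0 \<le> x"
  shows "gap x t \<le> gap x s"
proof -
  have "sqrt t * (sqrt (t + 4 * x) - sqrt (4 * x)) \<le> sqrt s * (sqrt (s + 4 * x) - sqrt (4 * x))"
    using assms by (intro mult_mono) auto
  with assms show ?thesis
    by (simp add: gap_eq_product)
qed

lemma gap_eq_quotient:
  assumes "0 \<le> t" "0 \<le> x"
  shows "gap x t = t\<^sup>2 / (sqrt (t\<^sup>2 + 4 * t * x) + sqrt (4 * t * x))"
proof (cases "t = 0")
  case False
  define A B where "A = sqrt (t\<^sup>2 + 4 * t * x)" and "B = sqrt (4 * t * x)"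
  have "0 < A" "0 \<le> B"
    unfolding A_def B_def using assms False by (auto intro: add_pos_nonneg)
  moreover have "(A - B) * (A + B) = t\<^sup>2"
    unfolding A_def B_def using assms by (simp add: algebra_simps power2_eq_square)
  ultimately show ?thesis
    unfolding gap_def A_def[symmetric] B_def[symmetric] by (simp add: eq_divide_eq)
qed (simp add: gap_def)

lemma gap_Suc_le:
  assumes "0 \<le> t" "0 \<le> x"
  shows "gap x (t + 1) \<le> gap x t + 2"
proof -
  define D where "D s = sqrt (s\<^sup>2 + 4 * s * x) + sqrt (4 * s * x)" for s
  have D_ge: "s \<le> D s" if "0 \<le> s" for s
  proof -
    have "s \<le> sqrt (s\<^sup>2 + 4 * s * x)"
      using that assms by (intro real_le_rsqrt) simp
    then show ?thesis
      unfolding D_def using that assms by (simp add: add_increasing2)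
  qed
  have "t\<^sup>2 \<le> (t + 1)\<^sup>2"
    using assms by (simp add: power_mono)
  moreover have "4 * t * x \<le> 4 * (t + 1) * x"
    using assms by (intro mult_right_mono) simp_all
  ultimately have "D t \<le> D (t + 1)"
    unfolding D_def by (intro add_mono real_sqrt_le_mono) simp_all
  then have "t\<^sup>2 / D (t + 1) \<le> t\<^sup>2 / D t"
  proof (cases "t = 0")
    case False
    then show ?thesis
      using \<open>D t \<le> D (t + 1)\<close> D_ge[of t] assms by (intro divide_left_mono) auto
  qed simp
  have pos: "t + 1 \<le> D (t + 1)"
    using D_ge assms by simp
  have "gap x (t + 1) - gap x t = (t + 1)\<^sup>2 / D (t + 1) - t\<^sup>2 / D t"
    using assms by (simp add: gap_eq_quotient D_def)
  also have "\<dots> \<le> ((t + 1)\<^sup>2 - t\<^sup>2) / D (t + 1)"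
    using \<open>t\<^sup>2 / D (t + 1) \<le> t\<^sup>2 / D t\<close> by (simp add: diff_divide_distrib)
  also have "\<dots> = (2 * t + 1) / D (t + 1)"
    by (simp add: power2_eq_square algebra_simps)
  also have "\<dots> \<le> 2"
    using pos assms by (simp add: divide_le_eq)
  finally show ?thesis
    by simp
qed

lemma abs_floor_diff_le:
  fixes a b c :: real
  shows "\<bar>of_int (\<lfloor>a\<rfloor> - \<lfloor>b\<rfloor>) - c\<bar> \<le> \<bar>a - b - c\<bar> + 1"
  by linarith

theorem proposition2:
  "\<exists>C::real. \<forall>(d::nat) (x::real). real d \<le> x \<and> 1 \<le> x \<longrightarrow>
     \<bar>real_of_int (K (d + 1) x - K d x) - (sqrt (real d + 1) - sqrt (real d)) * sqrt x\<bar> \<le> C"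
proof (intro exI allI impI)
  fix d :: nat and x :: real
  assume "real d \<le> x \<and> 1 \<le> x"
  then have x: "0 \<le> x" by simp
  define r where "r t = (t + sqrt (4 * t * x) + gap x t) / 2" for t
  define c where "c = (sqrt (real d + 1) - sqrt (real d)) * sqrt x"
  have K_diff: "K (d + 1) x - K d x = \<lfloor>r (real d + 1)\<rfloor> - \<lfloor>r (real d)\<rfloor>"
    using K_eq_floor[OF x] by (simp add: r_def gap_def add_ac)
  have sqrt_4tx: "sqrt (4 * t * x) = 2 * sqrt t * sqrt x" for t
    by (simp add: real_sqrt_mult)
  have "r (real d + 1) - r (real d) - c = (1 + gap x (real d + 1) - gap x (real d)) / 2"
    unfolding r_def c_def sqrt_4tx by (simp add: field_simps)
  moreover have "gap x (real d) \<le> gap x (real d + 1)" "gap x (real d + 1) \<le> gap x (real d) + 2"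
    using x by (simp_all add: gap_mono gap_Suc_le)
  ultimately have "\<bar>r (real d + 1) - r (real d) - c\<bar> \<le> 3 / 2"
    by simp
  then show "\<bar>real_of_int (K (d + 1) x - K d x) - c\<bar> \<le> 5 / 2"
    using abs_floor_diff_le[of "r (real d + 1)" "r (real d)" c] unfolding K_diff by linarith
qed

end
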